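(* Let $X=\{x_j:j\in J\}\subset\mathbb{R}^2$ be finite with $n=|J|$. Then the quadratic min-power centre $s^*$ of $X$ lies in $\mathrm{conv}(\mathcal{M})$, where $\mathcal{M}=\{M_j:j\in J\}$, $M_j=\frac{1}{n+1}\big(x_j+\sum_{i\in J}x_i\big)$.
   Context: $s^*$ is the unique minimiser of $P(s)=\sum_{i\in J}\|s-x_i\|^2+\max_{i\in J}\|s-x_i\|^2$. *)

theory Defs
  imports "HOL-Analysis.Analysis"
begin

definition qmp_P :: "'j set \<Rightarrow> ('j \<Rightarrow> real^2) \<Rightarrow> real^2 \<Rightarrow> real" where
  "qmp_P J x s = (\<Sum>i\<in>J. (norm (s - x i))\<^sup>2) + (MAX i\<in>J. (norm (s - x i))\<^sup>2)"

definition qmp_centre :: "'j set \<Rightarrow> ('j \<Rightarrow> real^2) \<Rightarrow> real^2" where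
  "qmp_centre J x = (THE s. \<forall>t. qmp_P J x s \<le> qmp_P J x t)"

end

theory Submission
  imports Defs
begin

text \<open>Let \<open>C\<close> be the convex hull of the points \<open>M\<^sub>j\<close> and \<open>p\<close> the closest point of \<open>C\<close> to an
  arbitrary \<open>s\<close>. If \<open>k\<close> realises the maximum in \<open>P(p)\<close>, then
  \<open>\<Sum>\<^sub>i (p - x\<^sub>i) + (p - x\<^sub>k) = (n + 1)(p - M\<^sub>k)\<close>, and the obtuse angle at \<open>p\<close> between \<open>s\<close> and
  \<open>M\<^sub>k \<in> C\<close> yields \<open>P(s) \<ge> P(p) + (n + 1)\<parallel>s - p\<parallel>\<^sup>2\<close>. Hence a minimiser of \<open>P\<close> on the compact
  set \<open>C\<close> minimises \<open>P\<close> globally, and since \<open>P\<close> is strongly convex it is the unique global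
  minimiser \<open>s\<^sup>*\<close>.\<close>

lemma continuous_on_MAX:
  fixes f :: "'i \<Rightarrow> 'a::topological_space \<Rightarrow> real"
  assumes "finite I" "I \<noteq> {}" "\<And>i. i \<in> I \<Longrightarrow> continuous_on S (f i)"
  shows "continuous_on S (\<lambda>s. MAX i\<in>I. f i s)"
  using assms
proof (induction I rule: finite_ne_induct)
  case (singleton i)
  then show ?case by simp
next
  case (insert i I)
  then have "(\<lambda>s. MAX j\<in>insert i I. f j s) = (\<lambda>s. max (f i s) (MAX j\<in>I. f j s))"
    by simp
  with insert show ?case by (auto intro!: continuous_on_max)
qed

lemma power2_norm_diff_through:
  fixes s p x :: "'a::real_inner"
  shows "(norm (s - x))\<^sup>2 = (norm (p - x))\<^sup>2 + (norm (s - p))\<^sup>2 + 2 * inner (s - p) (p - x)"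
proof -
  have "s - x = (s - p) + (p - x)" by simp
  then show ?thesis
    unfolding power2_norm_eq_inner by (simp add: inner_simps inner_commute algebra_simps)
qed

lemma power2_norm_midpoint_diff:
  fixes s t x :: "'a::real_inner"
  shows "(norm ((1/2) *\<^sub>R (s + t) - x))\<^sup>2
    = ((norm (s - x))\<^sup>2 + (norm (t - x))\<^sup>2) / 2 - (norm (s - t))\<^sup>2 / 4"
  unfolding power2_norm_eq_inner by (simp add: inner_simps inner_commute field_simps)

lemma the_minimiser_in_compact:
  fixes f :: "'a::real_normed_vector \<Rightarrow> real"
  assumes "compact C" "C \<noteq> {}" "continuous_on C f"
    and dominated: "\<And>t. \<exists>c\<in>C. f c \<le> f t"
    and midpoint_convex: "\<And>s t. s \<noteq> t \<Longrightarrow> 2 * f ((1/2) *\<^sub>R (s + t)) < f s + f t"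
  shows "(THE s. \<forall>t. f s \<le> f t) \<in> C"
proof -
  obtain s0 where "s0 \<in> C" and min_on_C: "\<And>c. c \<in> C \<Longrightarrow> f s0 \<le> f c"
    using continuous_attains_inf[OF assms(1-3)] by blast
  have global_min: "\<forall>t. f s0 \<le> f t"
    using dominated min_on_C order_trans by blast
  have "s = s0" if "\<forall>t. f s \<le> f t" for s
  proof (rule ccontr)
    assume "s \<noteq> s0"
    then have "2 * f ((1/2) *\<^sub>R (s + s0)) < f s + f s0"
      by (rule midpoint_convex)
    moreover have "f s \<le> f ((1/2) *\<^sub>R (s + s0))" "f s \<le> f s0" "f s0 \<le> f s"
      using that global_min by blast+
    ultimately show False by linarith
  qed
  with global_min have "(THE s. \<forall>t. f s \<le> f t) = s0"
    by (rule the_equality)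
  with \<open>s0 \<in> C\<close> show ?thesis by simp
qed

lemma continuous_on_qmp_P: "finite J \<Longrightarrow> J \<noteq> {} \<Longrightarrow> continuous_on S (qmp_P J x)"
  unfolding qmp_P_def[abs_def]
  by (intro continuous_intros continuous_on_MAX) auto

lemma qmp_P_closest_point:
  fixes J :: "'j set" and x :: "'j \<Rightarrow> real^2"
  assumes fin: "finite J" and ne: "J \<noteq> {}"
  defines "C \<equiv> convex hull ((\<lambda>j. (1 / (real (card J) + 1)) *\<^sub>R (x j + (\<Sum>i\<in>J. x i))) ` J)"
  shows "qmp_P J x (closest_point C s)
    \<le> qmp_P J x s - (real (card J) + 1) * (norm (s - closest_point C s))\<^sup>2"
proof -
  define p where "p = closest_point C s"
  define n where "n = real (card J)"
  define M where "M = (\<lambda>j. (1 / (n + 1)) *\<^sub>R (x j + (\<Sum>i\<in>J. x i)))"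
  define a where "a = (\<lambda>i. inner (s - p) (p - x i))"
  have C_eq: "C = convex hull (M ` J)"
    unfolding C_def M_def n_def by simp
  obtain k where "k \<in> J" and k_max: "(MAX i\<in>J. (norm (p - x i))\<^sup>2) = (norm (p - x k))\<^sup>2"
    using obtains_MAX[OF fin ne] by blast
  have "closed C"
    unfolding C_eq using fin by (intro compact_imp_closed finite_imp_compact_convex_hull) auto
  moreover have "M k \<in> C"
    unfolding C_eq using \<open>k \<in> J\<close> by (intro hull_inc) auto
  ultimately have obtuse: "inner (s - p) (M k - p) \<le> 0"
    unfolding p_def C_eq by (intro closest_point_dot) auto
  have "(\<Sum>i\<in>J. (p - x i)) + (p - x k) = (n + 1) *\<^sub>R p - (x k + (\<Sum>i\<in>J. x i))"
    by (simp add: sum_subtractf n_def scaleR_conv_of_real algebra_simps)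
  also have "x k + (\<Sum>i\<in>J. x i) = (n + 1) *\<^sub>R M k"
    unfolding M_def n_def by simp
  finally have "(\<Sum>i\<in>J. (p - x i)) + (p - x k) = (n + 1) *\<^sub>R (p - M k)"
    by (simp add: algebra_simps)
  then have "(\<Sum>i\<in>J. a i) + a k = (n + 1) * inner (s - p) (p - M k)"
    unfolding a_def by (metis inner_add_right inner_scaleR_right inner_sum_right)
  moreover have "inner (s - p) (p - M k) \<ge> 0"
    using obtuse by (simp add: inner_diff_right)
  ultimately have a_nonneg: "(\<Sum>i\<in>J. a i) + a k \<ge> 0"
    unfolding n_def by simp
  have split: "(norm (s - x i))\<^sup>2 = (norm (p - x i))\<^sup>2 + (norm (s - p))\<^sup>2 + 2 * a i" for i
    unfolding a_def by (rule power2_norm_diff_through)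
  have "(\<Sum>i\<in>J. (norm (s - x i))\<^sup>2)
      = (\<Sum>i\<in>J. (norm (p - x i))\<^sup>2) + n * (norm (s - p))\<^sup>2 + 2 * (\<Sum>i\<in>J. a i)"
    by (simp add: split sum.distrib sum_distrib_left n_def)
  moreover have "(norm (s - x k))\<^sup>2 \<le> (MAX i\<in>J. (norm (s - x i))\<^sup>2)"
    using fin \<open>k \<in> J\<close> by (intro Max_ge) auto
  ultimately have "qmp_P J x s
      \<ge> (\<Sum>i\<in>J. (norm (p - x i))\<^sup>2) + (norm (p - x k))\<^sup>2 + (n + 1) * (norm (s - p))\<^sup>2"
    unfolding qmp_P_def using split[of k] a_nonneg by (simp add: algebra_simps)
  moreover have "qmp_P J x p = (\<Sum>i\<in>J. (norm (p - x i))\<^sup>2) + (norm (p - x k))\<^sup>2"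
    unfolding qmp_P_def using k_max by simp
  ultimately show ?thesis
    unfolding p_def n_def by simp
qed

lemma qmp_P_midpoint:
  fixes J :: "'j set" and x :: "'j \<Rightarrow> real^2"
  assumes fin: "finite J" and ne: "J \<noteq> {}"
  shows "qmp_P J x ((1/2) *\<^sub>R (s + t))
    \<le> (qmp_P J x s + qmp_P J x t) / 2 - real (card J) * (norm (s - t))\<^sup>2 / 4"
proof -
  define m where "m = (1/2) *\<^sub>R (s + t)"
  obtain k where "k \<in> J" and k_max: "(MAX i\<in>J. (norm (m - x i))\<^sup>2) = (norm (m - x k))\<^sup>2"
    using obtains_MAX[OF fin ne] by blast
  have mid: "(norm (m - x i))\<^sup>2
      = ((norm (s - x i))\<^sup>2 + (norm (t - x i))\<^sup>2) / 2 - (norm (s - t))\<^sup>2 / 4" for i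
    unfolding m_def by (rule power2_norm_midpoint_diff)
  have "(\<Sum>i\<in>J. (norm (m - x i))\<^sup>2)
      = ((\<Sum>i\<in>J. (norm (s - x i))\<^sup>2) + (\<Sum>i\<in>J. (norm (t - x i))\<^sup>2)) / 2
        - real (card J) * (norm (s - t))\<^sup>2 / 4"
    by (simp add: mid sum_subtractf sum.distrib sum_divide_distrib[symmetric])
  moreover have "(norm (s - x k))\<^sup>2 \<le> (MAX i\<in>J. (norm (s - x i))\<^sup>2)"
    "(norm (t - x k))\<^sup>2 \<le> (MAX i\<in>J. (norm (t - x i))\<^sup>2)"
    using fin \<open>k \<in> J\<close> by (intro Max_ge; auto)+
  ultimately show ?thesis
    unfolding m_def[symmetric] qmp_P_def k_max mid[of k]
    using zero_le_power2[of "norm (s - t)"] by argo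
qed

theorem lemma4:
  fixes J :: "'j set" and x :: "'j \<Rightarrow> real^2"
  assumes "finite J" and "J \<noteq> {}"
  shows "qmp_centre J x \<in>
    convex hull ((\<lambda>j. (1 / (real (card J) + 1)) *\<^sub>R (x j + (\<Sum>i\<in>J. x i))) ` J)"
proof -
  define C where "C = convex hull ((\<lambda>j. (1 / (real (card J) + 1)) *\<^sub>R (x j + (\<Sum>i\<in>J. x i))) ` J)"
  have "compact C" "C \<noteq> {}"
    unfolding C_def using assms by (auto intro: finite_imp_compact_convex_hull)
  moreover have "\<exists>c\<in>C. qmp_P J x c \<le> qmp_P J x t" for t
  proof
    show "closest_point C t \<in> C"
      using \<open>compact C\<close> \<open>C \<noteq> {}\<close> by (intro closest_point_in_set compact_imp_closed)
    have "0 \<le> (real (card J) + 1) * (norm (t - closest_point C t))\<^sup>2"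
      by simp
    then show "qmp_P J x (closest_point C t) \<le> qmp_P J x t"
      using qmp_P_closest_point[OF assms, of x t] unfolding C_def by linarith
  qed
  moreover have "2 * qmp_P J x ((1/2) *\<^sub>R (s + t)) < qmp_P J x s + qmp_P J x t" if "s \<noteq> t" for s t
  proof -
    have "real (card J) * (norm (s - t))\<^sup>2 > 0"
      using that assms by (simp add: card_gt_0_iff)
    then show ?thesis
      using qmp_P_midpoint[OF assms, of x s t] by argo
  qed
  ultimately show ?thesis
    unfolding qmp_centre_def C_def[symmetric]
    by (intro the_minimiser_in_compact continuous_on_qmp_P assms)
qed

end
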